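(* Let $S$ be a nonempty set linearly ordered by $<$, made into a commutative semigroup by $m\cdot n=\max\{m,n\}$, equipped with the discrete topology, and having an identity $e$ (necessarily the least element of $S$). For each $n\in S\setminus\{e\}$ let $q_n=\sum_{j\in Q_n}q_n(j)\delta_j$ be a probability measure on $S$ with finite support $Q_n$ containing $e$, where $q_n(j)>0$ for $j\in Q_n$ and $\sum_{j\in Q_n}q_n(j)=1$. Define $*$ on point masses by $\delta_m*\delta_n=\delta_n*\delta_m=\delta_{\max\{m,n\}}$ if $m\neq n$ or $m=n=e$, and $\delta_n*\delta_n=q_n$ for $n\in S\setminus\{e\}$, extended bilinearly. For $n\in S$ put $\mathcal{L}_n=\{k\in S:k<n\}$. Then $(S,* )$ is a hermitian discrete hypergroup if and only if the following hold: (i) either $S$ is finite or $(S,<,\cdot)$ is isomorphic to $(\mathbb{Z}_+,<,\max)$; (ii) for every $n\in S\setminus\{e\}$, $\mathcal{L}_n\subset Q_n\subset\mathcal{L}_n\cup\{n\}$; (iii) if $\#S>2$, then for all $e\neq m<n$ in $S$: (a) $q_n(e)=q_n(m)\,q_m(e)$, and (b) $q_n(e)\bigl(1+\sum_{e\neq k\in\mathcal{L}_n}\frac{1}{q_k(e)}\bigr)\le 1$. Moreover, with $v_e=1$ and $v_n=1/q_n(e)$ for $n\in S\setminus\{e\}$, condition (iii) is equivalent to: (iii)$'$ if $\#S>2$, then for all $e\neq m<n$ in $S$, (a) $q_n(m)=v_m/v_n$ and (b) $\sum_{k\in\mathcal{L}_n}v_k\le v_n$.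
   Context: $\mathbb{Z}_+=\{0,1,2,\dots\}$. For a measure $\mu$ on a discrete set, $\mu(j)$ denotes $\mu(\{j\})$. A hermitian discrete hypergroup is a discrete set $K$ with a map $*$ from $K\times K$ to finitely supported probability measures on $K$ (extended bilinearly to measures), such that: $(\delta_m*\delta_n)*\delta_k=\delta_m*(\delta_n*\delta_k)$ for all $m,n,k$; there is $e\in K$ with $\delta_m*\delta_e=\delta_e*\delta_m=\delta_m$ for all $m$; $\delta_m*\delta_n=\delta_n*\delta_m$ for all $m,n$ (the involution being the identity map); and $e\in\operatorname{spt}(\delta_m*\delta_n)$ if and only if $m=n$. *)

theory Defs
  imports Complex_Main
begin

text \<open>Finitely supported measures on a discrete set are represented as functions
  \<open>'a \<Rightarrow> real\<close>; \<open>\<mu> j\<close> is the mass of the point \<open>j\<close>.\<close>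

definition supp_m :: "('a \<Rightarrow> real) \<Rightarrow> 'a set" where
  "supp_m \<mu> = {j. \<mu> j \<noteq> 0}"

definition pt_mass :: "'a \<Rightarrow> ('a \<Rightarrow> real)" where
  "pt_mass m = (\<lambda>j. if j = m then 1 else 0)"

definition fin_prob_on :: "'a set \<Rightarrow> ('a \<Rightarrow> real) \<Rightarrow> bool" where
  "fin_prob_on K \<mu> \<longleftrightarrow> (\<forall>j. 0 \<le> \<mu> j) \<and> finite (supp_m \<mu>) \<and> supp_m \<mu> \<subseteq> K
      \<and> sum \<mu> (supp_m \<mu>) = 1"

text \<open>Hermitian discrete hypergroup: \<open>conv m n\<close> is \<open>\<delta>_m * \<delta>_n\<close>; the bilinear
  extension gives \<open>(\<delta>_m*\<delta>_n)*\<delta>_k = \<Sum>_j (\<delta>_m*\<delta>_n)(j) \<delta>_j*\<delta>_k\<close>.\<close>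
definition herm_disc_hypergroup :: "'a set \<Rightarrow> ('a \<Rightarrow> 'a \<Rightarrow> ('a \<Rightarrow> real)) \<Rightarrow> bool" where
  "herm_disc_hypergroup K conv \<longleftrightarrow>
     (\<forall>m\<in>K. \<forall>n\<in>K. fin_prob_on K (conv m n)) \<and>
     (\<forall>m\<in>K. \<forall>n\<in>K. \<forall>k\<in>K. \<forall>i.
        (\<Sum>j\<in>supp_m (conv m n). conv m n j * conv j k i)
      = (\<Sum>j\<in>supp_m (conv n k). conv n k j * conv m j i)) \<and>
     (\<forall>m\<in>K. \<forall>n\<in>K. conv m n = conv n m) \<and>
     (\<exists>e\<in>K. (\<forall>m\<in>K. conv m e = pt_mass m \<and> conv e m = pt_mass m) \<and>
        (\<forall>m\<in>K. \<forall>n\<in>K. e \<in> supp_m (conv m n) \<longleftrightarrow> m = n))"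

definition max_conv :: "'a::linorder \<Rightarrow> ('a \<Rightarrow> 'a \<Rightarrow> real) \<Rightarrow> 'a \<Rightarrow> 'a \<Rightarrow> ('a \<Rightarrow> real)" where
  "max_conv e q m n = (if m \<noteq> n \<or> m = e then pt_mass (max m n) else q n)"

definition lower_set :: "'a::linorder set \<Rightarrow> 'a \<Rightarrow> 'a set" where
  "lower_set S n = {k\<in>S. k < n}"

end

theory Submission
  imports Defs
begin

text \<open>Associativity of the max-convolution has content only for
  (\<delta>_n * \<delta>_n) * \<delta>_k = \<delta>_n * (\<delta>_n * \<delta>_k) with n \<noteq> k, i.e. q_n * \<delta>_k = \<delta>_n * \<delta>_max(n,k).
  Evaluated at e this reads q_n(k) q_k(e) = (\<delta>_n * \<delta>_max(n,k))(e): for k > n the right side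
  vanishes, so q_n lives below n, and for k < n it is the product rule q_n(e) = q_n(k) q_k(e).
  Since q_n(e) > 0, the product rule puts every k < n into the finite support of q_n; hence all
  lower sets are finite, S is finite or ordered like the naturals, and \<Sum>_{k<n} q_n(k) \<le> 1 is
  condition (b). Conversely, the product rule gives q_n(i) = q_n(k) q_k(i) for i < k < n, which is
  exactly what makes q_n * \<delta>_k = q_n for k < n; all other instances of associativity are
  computations with point masses.\<close>

lemma supp_m_pt_mass [simp]: "supp_m (pt_mass a) = {a}"
  by (auto simp: supp_m_def pt_mass_def)

lemma sum_times_pt_mass:
  assumes "finite (supp_m \<mu>)"
  shows "(\<Sum>j\<in>supp_m \<mu>. \<mu> j * pt_mass j i) = \<mu> i"
proof -
  have "(\<Sum>j\<in>supp_m \<mu>. \<mu> j * pt_mass j i) = (\<Sum>j\<in>supp_m \<mu>. if j = i then \<mu> j else 0)"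
    by (rule sum.cong) (auto simp: pt_mass_def)
  also have "\<dots> = \<mu> i"
    using assms by (simp add: supp_m_def)
  finally show ?thesis .
qed

definition conv_measure :: "('a \<Rightarrow> 'a \<Rightarrow> ('a \<Rightarrow> real)) \<Rightarrow> ('a \<Rightarrow> real) \<Rightarrow> 'a \<Rightarrow> ('a \<Rightarrow> real)" where
  "conv_measure conv \<mu> k = (\<lambda>i. \<Sum>j\<in>supp_m \<mu>. \<mu> j * conv j k i)"

lemma conv_measure_pt_mass [simp]: "conv_measure conv (pt_mass a) k = conv a k"
  by (simp only: conv_measure_def supp_m_pt_mass) (simp add: pt_mass_def)

definition assoc_on :: "'a set \<Rightarrow> ('a \<Rightarrow> 'a \<Rightarrow> ('a \<Rightarrow> real)) \<Rightarrow> bool" where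
  "assoc_on K conv \<longleftrightarrow> (\<forall>m\<in>K. \<forall>n\<in>K. \<forall>k\<in>K. \<forall>i.
     (\<Sum>j\<in>supp_m (conv m n). conv m n j * conv j k i)
   = (\<Sum>j\<in>supp_m (conv n k). conv n k j * conv m j i))"

lemma assoc_on_iff_conv_measure:
  assumes "\<And>m n. conv m n = conv n m"
  shows "assoc_on K conv \<longleftrightarrow>
    (\<forall>m\<in>K. \<forall>n\<in>K. \<forall>k\<in>K. conv_measure conv (conv m n) k = conv_measure conv (conv n k) m)"
  unfolding assoc_on_def conv_measure_def fun_eq_iff by (simp add: assms[of _ m for m])

section \<open>Linear orders with finite lower sets\<close>

lemma lower_set_Max:
  assumes "finite (lower_set S a)" "lower_set S a \<noteq> {}"
  shows "lower_set S a = insert (Max (lower_set S a)) (lower_set S (Max (lower_set S a)))"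
proof -
  define p where "p = Max (lower_set S a)"
  have "p \<in> lower_set S a" and "\<And>k. k \<in> lower_set S a \<Longrightarrow> k \<le> p"
    using assms unfolding p_def by auto
  then show ?thesis
    unfolding p_def[symmetric] by (auto simp: lower_set_def intro: le_neq_trans)
qed

lemma card_lower_set_downward_closed:
  assumes fin: "\<forall>a\<in>S. finite (lower_set S a)" and "a \<in> S" and "m \<le> card (lower_set S a)"
  shows "\<exists>b\<in>S. card (lower_set S b) = m"
  using assms(2,3)
proof (induction "card (lower_set S a)" arbitrary: a)
  case 0
  then show ?case by auto
next
  case (Suc c)
  show ?case
  proof (cases "m = Suc c")
    case True
    then show ?thesis using Suc by metis
  next
    case False
    let ?L = "lower_set S a"
    have L: "finite ?L" "?L \<noteq> {}" using fin Suc by auto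
    define p where "p = Max ?L"
    have "p \<in> S" using Max_in[OF L] by (simp add: p_def lower_set_def)
    have "?L = insert p (lower_set S p)"
      unfolding p_def by (rule lower_set_Max[OF L])
    moreover have "p \<notin> lower_set S p" by (simp add: lower_set_def)
    ultimately have "card ?L = Suc (card (lower_set S p))"
      using fin \<open>p \<in> S\<close> by simp
    then show ?thesis using Suc False \<open>p \<in> S\<close> by auto
  qed
qed

lemma order_iso_nat_if_lower_sets_finite:
  fixes S :: "'a::linorder set"
  assumes "infinite S" and fin: "\<forall>a\<in>S. finite (lower_set S a)"
  shows "\<exists>f::'a \<Rightarrow> nat. bij_betw f S UNIV \<and> (\<forall>a\<in>S. \<forall>b\<in>S. a < b \<longleftrightarrow> f a < f b)"
proof -
  define f where "f a = card (lower_set S a)" for a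
  have strict: "f a < f b" if "a \<in> S" "b \<in> S" "a < b" for a b
  proof -
    have "lower_set S a \<subset> lower_set S b"
      using that by (auto simp: lower_set_def)
    then show ?thesis unfolding f_def using fin that(2) by (simp add: psubset_card_mono)
  qed
  have order: "\<forall>a\<in>S. \<forall>b\<in>S. a < b \<longleftrightarrow> f a < f b"
    using strict by (metis less_asym linorder_cases)
  have inj: "inj_on f S"
    using strict by (intro inj_onI) (metis less_irrefl linorder_cases)
  have unbounded: "\<exists>a\<in>S. n \<le> f a" for n
  proof (rule ccontr)
    assume "\<not> (\<exists>a\<in>S. n \<le> f a)"
    then have "f ` S \<subseteq> {..<n}" by (auto simp: not_le)
    then show False
      using assms(1) finite_image_iff[OF inj] finite_subset by blast
  qed
  have "n \<in> f ` S" for n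
  proof -
    obtain a where "a \<in> S" "n \<le> f a" using unbounded by blast
    then obtain b where "b \<in> S" "f b = n"
      using card_lower_set_downward_closed[OF fin] unfolding f_def by blast
    then show ?thesis by blast
  qed
  then have "f ` S = UNIV" by blast
  then show ?thesis using inj order by (auto simp: bij_betw_def)
qed

lemma max_conv_neq: "m \<noteq> n \<Longrightarrow> max_conv e q m n = pt_mass (max m n)"
  by (simp add: max_conv_def)

lemma max_conv_neq_apply: "m \<noteq> n \<Longrightarrow> max_conv e q m n i = (if i = max m n then 1 else 0)"
  by (simp add: max_conv_def pt_mass_def)

lemma max_conv_self: "max_conv e q n n = (if n = e then pt_mass e else q n)"
  by (simp add: max_conv_def)

lemma max_conv_commute: "max_conv e q m n = max_conv e q n m"
  by (auto simp: max_conv_def max.commute)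

lemma max_conv_unit:
  assumes "e \<le> m"
  shows "max_conv e q e m = pt_mass m" "max_conv e q m e = pt_mass m"
  using assms by (auto simp: max_conv_def max_def)

locale max_conv_data =
  fixes S :: "'a::linorder set" and e :: 'a and q :: "'a \<Rightarrow> 'a \<Rightarrow> real"
  assumes e_in_S: "e \<in> S" and e_least: "n \<in> S \<Longrightarrow> e \<le> n"
    and q_nonneg: "n \<in> S \<Longrightarrow> n \<noteq> e \<Longrightarrow> 0 \<le> q n j"
    and finite_supp_q: "n \<in> S \<Longrightarrow> n \<noteq> e \<Longrightarrow> finite (supp_m (q n))"
    and supp_q_subset: "n \<in> S \<Longrightarrow> n \<noteq> e \<Longrightarrow> supp_m (q n) \<subseteq> S"
    and e_in_supp_q: "n \<in> S \<Longrightarrow> n \<noteq> e \<Longrightarrow> e \<in> supp_m (q n)"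
    and sum_q: "n \<in> S \<Longrightarrow> n \<noteq> e \<Longrightarrow> (\<Sum>j\<in>supp_m (q n). q n j) = 1"
begin

abbreviation conv :: "'a \<Rightarrow> 'a \<Rightarrow> ('a \<Rightarrow> real)" where
  "conv \<equiv> max_conv e q"

definition support_condition :: bool where
  "support_condition \<longleftrightarrow>
     (\<forall>n\<in>S - {e}. lower_set S n \<subseteq> supp_m (q n) \<and> supp_m (q n) \<subseteq> lower_set S n \<union> {n})"

definition product_rule :: bool where
  "product_rule \<longleftrightarrow> (\<forall>m\<in>S. \<forall>n\<in>S. m \<noteq> e \<and> m < n \<longrightarrow> q n e = q n m * q m e)"

lemma e_less: "n \<in> S \<Longrightarrow> n \<noteq> e \<Longrightarrow> e < n"
  using e_least by force

lemma lower_set_e: "lower_set S e = {}"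
  by (auto simp: lower_set_def dest: e_least leD)

lemma q_e_pos: "n \<in> S \<Longrightarrow> n \<noteq> e \<Longrightarrow> 0 < q n e"
  using q_nonneg[of n e] e_in_supp_q[of n] by (simp add: supp_m_def)

lemma q_outside: "n \<in> S \<Longrightarrow> n \<noteq> e \<Longrightarrow> j \<notin> S \<Longrightarrow> q n j = 0"
  using supp_q_subset[of n] by (auto simp: supp_m_def)

lemma fin_prob_on_conv:
  assumes "m \<in> S" "n \<in> S"
  shows "fin_prob_on S (conv m n)"
proof (cases "m = n \<and> n \<noteq> e")
  case True
  then show ?thesis
    using assms by (simp add: max_conv_self fin_prob_on_def q_nonneg finite_supp_q supp_q_subset sum_q)
next
  case False
  then have "conv m n = pt_mass (max m n)"
    by (auto simp: max_conv_def)
  moreover have "max m n \<in> S"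
    using assms by (simp add: max_def)
  ultimately show ?thesis
    by (simp add: fin_prob_on_def) (simp add: pt_mass_def)
qed

lemma e_in_supp_conv_iff:
  assumes "m \<in> S" "n \<in> S"
  shows "e \<in> supp_m (conv m n) \<longleftrightarrow> m = n"
proof (cases "m = n")
  case True
  then show ?thesis using assms e_in_supp_q by (simp add: max_conv_self)
next
  case False
  then have "max m n \<noteq> e" using assms e_least by (auto simp: max_def intro: antisym)
  then show ?thesis using False by (simp add: max_conv_neq)
qed

lemma herm_disc_hypergroup_iff_assoc_on:
  "herm_disc_hypergroup S conv \<longleftrightarrow> assoc_on S conv"
proof
  assume "herm_disc_hypergroup S conv"
  then show "assoc_on S conv"
    unfolding herm_disc_hypergroup_def assoc_on_def by (elim conjE) assumption
next
  assume "assoc_on S conv"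
  moreover have "\<forall>m\<in>S. \<forall>n\<in>S. fin_prob_on S (conv m n)"
    using fin_prob_on_conv by blast
  moreover have "\<forall>m\<in>S. \<forall>n\<in>S. conv m n = conv n m"
    using max_conv_commute by blast
  moreover have "\<exists>u\<in>S. (\<forall>m\<in>S. conv m u = pt_mass m \<and> conv u m = pt_mass m) \<and>
      (\<forall>m\<in>S. \<forall>n\<in>S. u \<in> supp_m (conv m n) \<longleftrightarrow> m = n)"
  proof -
    have "\<forall>m\<in>S. conv m e = pt_mass m \<and> conv e m = pt_mass m"
      by (auto simp: max_conv_unit e_least)
    moreover have "\<forall>m\<in>S. \<forall>n\<in>S. e \<in> supp_m (conv m n) \<longleftrightarrow> m = n"
      using e_in_supp_conv_iff by blast
    ultimately show ?thesis using e_in_S by blast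
  qed
  ultimately show "herm_disc_hypergroup S conv"
    unfolding herm_disc_hypergroup_def assoc_on_def by (intro conjI) assumption+
qed

lemma assoc_on_conv_iff:
  "assoc_on S conv \<longleftrightarrow>
    (\<forall>m\<in>S. \<forall>n\<in>S. \<forall>k\<in>S. conv_measure conv (conv m n) k = conv_measure conv (conv n k) m)"
  by (rule assoc_on_iff_conv_measure) (rule max_conv_commute)

section \<open>Necessity of the conditions\<close>

lemma assoc_on_square_at_e:
  assumes "assoc_on S conv" and "n \<in> S" "k \<in> S" "n \<noteq> e" "k \<noteq> e" "n \<noteq> k"
  shows "q n k * q k e = conv n (max n k) e"
proof -
  have "conv_measure conv (conv n n) k = conv_measure conv (conv n k) n"
    using assms assoc_on_conv_iff by blast
  then have "conv_measure conv (q n) k e = conv (max n k) n e"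
    using assms by (simp add: max_conv_self max_conv_neq)
  then have "conv_measure conv (q n) k e = conv n (max n k) e"
    by (simp add: max_conv_commute)
  moreover have "conv_measure conv (q n) k e
      = (\<Sum>j\<in>supp_m (q n). if j = k then q n k * q k e else 0)"
    unfolding conv_measure_def
  proof (rule sum.cong)
    fix j assume "j \<in> supp_m (q n)"
    then have "e < max j k"
      using assms supp_q_subset e_less by (auto simp: less_max_iff_disj)
    then show "q n j * conv j k e = (if j = k then q n k * q k e else 0)"
      using assms by (auto simp: max_conv_self max_conv_neq pt_mass_def)
  qed simp
  ultimately show ?thesis
    using assms finite_supp_q by (simp add: supp_m_def split: if_splits)
qed

lemma assoc_on_imp_product_rule:
  assumes "assoc_on S conv"
  shows product_rule
  unfolding product_rule_def
proof (intro ballI impI)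
  fix m n assume mn: "m \<in> S" "n \<in> S" "m \<noteq> e \<and> m < n"
  then have "n \<noteq> e" "n \<noteq> m" "max n m = n" using e_least[of m] by auto
  then show "q n e = q n m * q m e"
    using assoc_on_square_at_e[OF assms, of n m] mn by (simp add: max_conv_self)
qed

lemma assoc_on_imp_supp_q_le:
  assumes "assoc_on S conv" and "n \<in> S" "n \<noteq> e"
  shows "supp_m (q n) \<subseteq> lower_set S n \<union> {n}"
proof
  fix j assume j: "j \<in> supp_m (q n)"
  then have "j \<in> S" using assms supp_q_subset by blast
  show "j \<in> lower_set S n \<union> {n}"
  proof (rule ccontr)
    assume "j \<notin> lower_set S n \<union> {n}"
    then have "n < j" using \<open>j \<in> S\<close> by (auto simp: lower_set_def)
    then have "j \<noteq> e" "max n j = j" using e_least[OF assms(2)] by auto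
    then have "q n j * q j e = 0"
      using assoc_on_square_at_e[OF assms(1,2) \<open>j \<in> S\<close> assms(3)] \<open>n < j\<close>
      by (simp add: max_conv_neq pt_mass_def)
    then show False
      using j q_e_pos[OF \<open>j \<in> S\<close> \<open>j \<noteq> e\<close>] by (simp add: supp_m_def)
  qed
qed

lemma product_rule_imp_lower_set_subset_supp:
  assumes product_rule and "n \<in> S" "n \<noteq> e"
  shows "lower_set S n \<subseteq> supp_m (q n)"
proof
  fix k assume k: "k \<in> lower_set S n"
  show "k \<in> supp_m (q n)"
  proof (cases "k = e")
    case True
    then show ?thesis using assms e_in_supp_q by blast
  next
    case False
    then have "q n e = q n k * q k e"
      using assms k unfolding product_rule_def lower_set_def by blast
    then have "q n k \<noteq> 0"
      using q_e_pos[OF assms(2,3)] by (cases "q n k = 0") auto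
    then show ?thesis by (simp add: supp_m_def)
  qed
qed

lemma assoc_on_imp_support_condition:
  assumes "assoc_on S conv"
  shows support_condition
  unfolding support_condition_def
  using assoc_on_imp_supp_q_le[OF assms]
    product_rule_imp_lower_set_subset_supp[OF assoc_on_imp_product_rule[OF assms]]
  by blast

lemma product_rule_imp_finite_lower_set:
  assumes product_rule and "n \<in> S"
  shows "finite (lower_set S n)"
proof (cases "n = e")
  case False
  then show ?thesis
    using product_rule_imp_lower_set_subset_supp[OF assms] assms finite_supp_q finite_subset
    by blast
qed (simp add: lower_set_e)

lemma product_rule_imp_order_type:
  assumes product_rule
  shows "finite S \<or> (\<exists>f::'a \<Rightarrow> nat. bij_betw f S UNIV \<and> (\<forall>a\<in>S. \<forall>b\<in>S. a < b \<longleftrightarrow> f a < f b))"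
  using order_iso_nat_if_lower_sets_finite product_rule_imp_finite_lower_set[OF assms] by blast

lemma product_rule_imp_mass_bound:
  assumes product_rule and "n \<in> S" "n \<noteq> e"
  shows "q n e * (1 + (\<Sum>k\<in>lower_set S n - {e}. 1 / q k e)) \<le> 1"
proof -
  let ?L = "lower_set S n"
  have fin: "finite ?L" using assms product_rule_imp_finite_lower_set by blast
  have "e \<in> ?L" using assms e_in_S e_less by (simp add: lower_set_def)
  have "(\<Sum>k\<in>?L - {e}. q n e / q k e) = (\<Sum>k\<in>?L - {e}. q n k)"
  proof (rule sum.cong)
    fix k assume k: "k \<in> ?L - {e}"
    then have "q n e = q n k * q k e"
      using assms unfolding product_rule_def lower_set_def by blast
    moreover have "q k e \<noteq> 0"
      using k q_e_pos[of k] by (auto simp: lower_set_def)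
    ultimately show "q n e / q k e = q n k" by simp
  qed simp
  then have "q n e * (1 + (\<Sum>k\<in>?L - {e}. 1 / q k e)) = (\<Sum>k\<in>?L. q n k)"
    using fin \<open>e \<in> ?L\<close> by (simp add: sum_distrib_left sum.remove algebra_simps)
  also have "\<dots> \<le> (\<Sum>k\<in>supp_m (q n). q n k)"
    using assms product_rule_imp_lower_set_subset_supp finite_supp_q q_nonneg
    by (intro sum_mono2) auto
  also have "\<dots> = 1" using assms sum_q by blast
  finally show ?thesis .
qed

section \<open>Sufficiency of the conditions\<close>

lemma product_rule_chain:
  assumes product_rule and "i \<in> S" "k \<in> S" "n \<in> S" "i < k" "k < n" "k \<noteq> e"
  shows "q n i = q n k * q k i"
proof (cases "i = e")
  case True
  then show ?thesis using assms unfolding product_rule_def by blast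
next
  case False
  have "q n i * q i e = q n k * q k e"
    using assms False unfolding product_rule_def by (metis less_trans)
  also have "\<dots> = q n k * q k i * q i e"
    using assms False unfolding product_rule_def by (metis mult.assoc)
  finally show ?thesis
    using q_e_pos[OF \<open>i \<in> S\<close> False] by simp
qed

lemma support_condition_q_above:
  assumes support_condition and "k \<in> S" "k \<noteq> e" "k < i"
  shows "q k i = 0"
  using assms unfolding support_condition_def lower_set_def supp_m_def by fastforce

lemma support_condition_sum_lower_set:
  assumes support_condition and "k \<in> S" "k \<noteq> e"
  shows "(\<Sum>j\<in>lower_set S k. q k j) + q k k = 1"
proof -
  have sub: "lower_set S k \<subseteq> supp_m (q k)" "supp_m (q k) \<subseteq> lower_set S k \<union> {k}"
    using assms unfolding support_condition_def by blast+
  then have fin: "finite (lower_set S k)"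
    using assms finite_supp_q finite_subset by blast
  then have "(\<Sum>j\<in>lower_set S k. q k j) + q k k = (\<Sum>j\<in>lower_set S k \<union> {k}. q k j)"
    by (simp add: lower_set_def)
  also have "\<dots> = (\<Sum>j\<in>supp_m (q k). q k j)"
    using fin sub(2) by (intro sum.mono_neutral_right) (auto simp: supp_m_def)
  finally show ?thesis
    using assms sum_q by simp
qed

lemma q_mass_below:
  assumes support_condition product_rule and "n \<in> S" "k \<in> S" "k \<noteq> e" "k < n"
  shows "(\<Sum>j\<in>lower_set S k. q n j) + q n k * q k k = q n k"
proof -
  have "(\<Sum>j\<in>lower_set S k. q n j) = (\<Sum>j\<in>lower_set S k. q n k * q k j)"
    using product_rule_chain[OF assms(2) _ assms(4,3) _ assms(6,5)]
    by (intro sum.cong) (auto simp: lower_set_def)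
  then show ?thesis
    using support_condition_sum_lower_set[OF assms(1,4,5)]
    by (simp add: sum_distrib_left[symmetric] distrib_left[symmetric])
qed

lemma conv_measure_unit:
  assumes "finite (supp_m \<mu>)" "supp_m \<mu> \<subseteq> S"
  shows "conv_measure conv \<mu> e = \<mu>"
proof
  fix i
  have "(\<Sum>j\<in>supp_m \<mu>. \<mu> j * conv j e i) = (\<Sum>j\<in>supp_m \<mu>. \<mu> j * pt_mass j i)"
  proof (rule sum.cong)
    fix j assume "j \<in> supp_m \<mu>"
    then have "e \<le> j" using assms e_least by blast
    then show "\<mu> j * conv j e i = \<mu> j * pt_mass j i" by (simp add: max_conv_unit)
  qed simp
  then show "conv_measure conv \<mu> e i = \<mu> i"
    using assms sum_times_pt_mass by (simp add: conv_measure_def)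
qed

lemma conv_measure_q_greater:
  assumes support_condition and "n \<in> S" "n \<noteq> e" "n < k"
  shows "conv_measure conv (q n) k = pt_mass k"
proof
  fix i
  have "(\<Sum>j\<in>supp_m (q n). q n j * conv j k i) = (\<Sum>j\<in>supp_m (q n). q n j * pt_mass k i)"
  proof (rule sum.cong)
    fix j assume "j \<in> supp_m (q n)"
    then have "j < k"
      using assms unfolding support_condition_def lower_set_def by fastforce
    then show "q n j * conv j k i = q n j * pt_mass k i"
      by (simp add: max_conv_neq)
  qed simp
  also have "\<dots> = pt_mass k i"
    using assms sum_q by (simp add: sum_distrib_right[symmetric])
  finally show "conv_measure conv (q n) k i = pt_mass k i"
    by (simp add: conv_measure_def)
qed

lemma conv_measure_q_less:
  assumes supp: support_condition and prod: product_rule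
    and "n \<in> S" "k \<in> S" "k \<noteq> e" "k < n"
  shows "conv_measure conv (q n) k = q n"
proof
  fix i
  let ?Q = "supp_m (q n)"
  have "n \<noteq> e" using assms e_least by force
  have finQ: "finite ?Q" using assms \<open>n \<noteq> e\<close> finite_supp_q by blast
  have LQ: "lower_set S n \<subseteq> ?Q" "?Q \<subseteq> S"
    using supp assms \<open>n \<noteq> e\<close> supp_q_subset unfolding support_condition_def by blast+
  then have "k \<in> ?Q" using assms by (auto simp: lower_set_def)
  have q_k_above: "q k j = 0" if "k < j" for j
    using support_condition_q_above[OF supp \<open>k \<in> S\<close> \<open>k \<noteq> e\<close> that] .
  consider "k < i" | "i < k" | "i = k" by fastforce
  then have "(\<Sum>j\<in>?Q. q n j * conv j k i) = q n i"
  proof cases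
    case 1
    have "q n j * conv j k i = (if j = i then q n j else 0)" for j
      using 1 q_k_above \<open>k \<noteq> e\<close>
      by (cases j k rule: linorder_cases) (auto simp: max_conv_self max_conv_neq_apply)
    then show ?thesis using finQ by (simp add: supp_m_def)
  next
    case 2
    have "q n j * conv j k i = (if j = k then q n k * q k i else 0)" for j
      using 2 \<open>k \<noteq> e\<close>
      by (cases j k rule: linorder_cases) (auto simp: max_conv_self max_conv_neq_apply)
    then have "(\<Sum>j\<in>?Q. q n j * conv j k i) = q n k * q k i"
      using finQ \<open>k \<in> ?Q\<close> by simp
    also have "\<dots> = q n i"
      using 2 product_rule_chain[OF prod _ \<open>k \<in> S\<close> \<open>n \<in> S\<close> 2 \<open>k < n\<close> \<open>k \<noteq> e\<close>]
        q_outside[OF \<open>n \<in> S\<close> \<open>n \<noteq> e\<close>] q_outside[OF \<open>k \<in> S\<close> \<open>k \<noteq> e\<close>]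
      by (cases "i \<in> S") auto
    finally show ?thesis .
  next
    case 3
    let ?L = "lower_set S k"
    have "q n j * conv j k i = (if j \<in> ?L then q n j else 0) + (if j = k then q n k * q k k else 0)"
      if "j \<in> ?Q" for j
      using 3 \<open>k \<noteq> e\<close> \<open>?Q \<subseteq> S\<close> that
      by (cases j k rule: linorder_cases) (auto simp: lower_set_def max_conv_self max_conv_neq_apply)
    then have "(\<Sum>j\<in>?Q. q n j * conv j k i) = (\<Sum>j\<in>?Q \<inter> ?L. q n j) + q n k * q k k"
      using finQ \<open>k \<in> ?Q\<close> by (simp add: sum.distrib sum.inter_restrict cong: sum.cong)
    also have "?Q \<inter> ?L = ?L" using LQ \<open>k < n\<close> by (auto simp: lower_set_def)
    finally show ?thesis
      using 3 q_mass_below[OF supp prod \<open>n \<in> S\<close> \<open>k \<in> S\<close> \<open>k \<noteq> e\<close> \<open>k < n\<close>] by simp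
  qed
  then show "conv_measure conv (q n) k i = q n i"
    by (simp add: conv_measure_def)
qed

lemma conv_measure_q:
  assumes support_condition product_rule and "n \<in> S" "k \<in> S" "n \<noteq> e" "n \<noteq> k"
  shows "conv_measure conv (q n) k = conv n (max n k)"
proof -
  consider "n < k" | "k = e" | "k \<noteq> e" "k < n" using assms by fastforce
  then show ?thesis
  proof cases
    case 1
    then show ?thesis using assms conv_measure_q_greater by (simp add: max_conv_neq)
  next
    case 2
    then have "max n k = n" using e_least[OF \<open>n \<in> S\<close>] by (simp add: max_absorb1)
    then show ?thesis
      using 2 assms conv_measure_unit finite_supp_q supp_q_subset by (simp add: max_conv_self)
  next
    case 3
    then show ?thesis using assms conv_measure_q_less by (simp add: max_conv_self)
  qed
qed

lemma assoc_on_conv: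
  assumes support_condition product_rule
  shows "assoc_on S conv"
  unfolding assoc_on_conv_iff
proof (intro ballI)
  fix m n k assume S: "m \<in> S" "n \<in> S" "k \<in> S"
  have qn: "conv_measure conv (q b) a = conv b (max b a)"
    if "b \<in> S" "a \<in> S" "b \<noteq> e" "b \<noteq> a" for a b
    using conv_measure_q[OF assms that] .
  have unit: "conv_measure conv (conv a b) e = conv a b" if "a \<in> S" "b \<in> S" for a b
    using fin_prob_on_conv[OF that] by (intro conv_measure_unit) (auto simp: fin_prob_on_def)
  consider "m = e" | "k = e" | "n = e" | "m \<noteq> e" "n \<noteq> e" "k \<noteq> e"
    by blast
  then show "conv_measure conv (conv m n) k = conv_measure conv (conv n k) m"
  proof cases
    case 1
    then show ?thesis using S unit e_least by (simp add: max_conv_unit)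
  next
    case 2
    then show ?thesis using S unit e_least by (simp add: max_conv_unit max_conv_commute)
  next
    case 3
    then show ?thesis using S e_least by (simp add: max_conv_unit max_conv_commute)
  next
    case 4
    then show ?thesis using S
      by (cases "m = n"; cases "n = k"; cases "m = k")
        (auto simp: max_conv_self max_conv_neq qn max_conv_commute max.commute max_def)
  qed
qed

lemma herm_disc_hypergroup_iff_conditions:
  "herm_disc_hypergroup S conv \<longleftrightarrow> support_condition \<and> product_rule"
  using herm_disc_hypergroup_iff_assoc_on assoc_on_imp_support_condition
    assoc_on_imp_product_rule assoc_on_conv
  by blast

section \<open>Conditions (iii) and (iii)'\<close>

definition mass_conditions :: bool where
  "mass_conditions \<longleftrightarrow> (\<forall>m\<in>S. \<forall>n\<in>S. m \<noteq> e \<and> m < n \<longrightarrow>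
     q n e = q n m * q m e \<and> finite (lower_set S n) \<and>
     q n e * (1 + (\<Sum>k\<in>lower_set S n - {e}. 1 / q k e)) \<le> 1)"

definition weight :: "'a \<Rightarrow> real" where
  "weight k = (if k = e then 1 else 1 / q k e)"

definition weight_conditions :: bool where
  "weight_conditions \<longleftrightarrow> (\<forall>m\<in>S. \<forall>n\<in>S. m \<noteq> e \<and> m < n \<longrightarrow>
     q n m = weight m / weight n \<and> finite (lower_set S n) \<and>
     (\<Sum>k\<in>lower_set S n. weight k) \<le> weight n)"

lemma infinite_or_card_gt_2:
  assumes "m \<in> S" "n \<in> S" "m \<noteq> e" "m < n"
  shows "infinite S \<or> 2 < card S"
proof -
  have "{e, m, n} \<subseteq> S" "card {e, m, n} = 3"
    using assms e_in_S e_less[of m] by auto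
  then show ?thesis
    using card_mono[of S "{e, m, n}"] by (cases "finite S") auto
qed

lemma product_rule_iff_mass_conditions:
  "product_rule \<longleftrightarrow> ((infinite S \<or> 2 < card S) \<longrightarrow> mass_conditions)"
proof
  assume P: product_rule
  have "q n e = q n m * q m e \<and> finite (lower_set S n) \<and>
      q n e * (1 + (\<Sum>k\<in>lower_set S n - {e}. 1 / q k e)) \<le> 1"
    if "m \<in> S" "n \<in> S" "m \<noteq> e" "m < n" for m n
  proof -
    have "n \<noteq> e" using that e_least[of m] by auto
    moreover have "q n e = q n m * q m e"
      using P that unfolding product_rule_def by blast
    ultimately show ?thesis
      using P that product_rule_imp_finite_lower_set product_rule_imp_mass_bound by blast
  qed
  then show "(infinite S \<or> 2 < card S) \<longrightarrow> mass_conditions"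
    unfolding mass_conditions_def by blast
next
  assume H: "(infinite S \<or> 2 < card S) \<longrightarrow> mass_conditions"
  show product_rule
    unfolding product_rule_def
  proof (intro ballI impI)
    fix m n assume mn: "m \<in> S" "n \<in> S" "m \<noteq> e \<and> m < n"
    then have mass_conditions using H infinite_or_card_gt_2 by blast
    then show "q n e = q n m * q m e"
      using mn unfolding mass_conditions_def by blast
  qed
qed

lemma weight_ratio_iff:
  assumes "m \<in> S" "n \<in> S" "m \<noteq> e" "m < n"
  shows "q n m = weight m / weight n \<longleftrightarrow> q n e = q n m * q m e"
  using assms q_e_pos[of m] q_e_pos[of n] e_less[of m]
  by (auto simp: weight_def field_simps)

lemma sum_weight_lower_set:
  assumes "finite (lower_set S n)" "n \<in> S" "n \<noteq> e"
  shows "(\<Sum>k\<in>lower_set S n. weight k) = 1 + (\<Sum>k\<in>lower_set S n - {e}. 1 / q k e)"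
proof -
  have "e \<in> lower_set S n" using assms e_in_S e_less by (simp add: lower_set_def)
  then show ?thesis
    using assms by (simp add: sum.remove weight_def)
qed

lemma weight_bound_iff:
  assumes "finite (lower_set S n)" "n \<in> S" "n \<noteq> e"
  shows "(\<Sum>k\<in>lower_set S n. weight k) \<le> weight n \<longleftrightarrow>
    q n e * (1 + (\<Sum>k\<in>lower_set S n - {e}. 1 / q k e)) \<le> 1"
  using sum_weight_lower_set[OF assms] q_e_pos[OF assms(2,3)] assms(3)
  by (simp add: weight_def le_divide_eq mult.commute)

lemma mass_conditions_iff_weight_conditions: "mass_conditions \<longleftrightarrow> weight_conditions"
proof -
  have "(q n e = q n m * q m e \<and> finite (lower_set S n) \<and>
          q n e * (1 + (\<Sum>k\<in>lower_set S n - {e}. 1 / q k e)) \<le> 1)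
    \<longleftrightarrow> (q n m = weight m / weight n \<and> finite (lower_set S n) \<and>
          (\<Sum>k\<in>lower_set S n. weight k) \<le> weight n)"
    if "m \<in> S" "n \<in> S" "m \<noteq> e" "m < n" for m n
  proof -
    have "n \<noteq> e" using that e_least[of m] by auto
    then show ?thesis
      using weight_ratio_iff[OF that] weight_bound_iff[OF _ \<open>n \<in> S\<close>] by blast
  qed
  then show ?thesis
    unfolding mass_conditions_def weight_conditions_def by blast
qed

end

theorem theorem3p2:
  fixes S :: "'a::linorder set" and e :: 'a and q :: "'a \<Rightarrow> 'a \<Rightarrow> real"
  assumes "S \<noteq> {}" and "e \<in> S" and "\<forall>n\<in>S. e \<le> n"
    and "\<forall>n\<in>S - {e}. (\<forall>j. 0 \<le> q n j) \<and> finite (supp_m (q n)) \<and> supp_m (q n) \<subseteq> S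
                        \<and> e \<in> supp_m (q n) \<and> (\<Sum>j\<in>supp_m (q n). q n j) = 1"
  shows "(herm_disc_hypergroup S (max_conv e q) \<longleftrightarrow>
           ((finite S \<or> (\<exists>f::'a \<Rightarrow> nat. bij_betw f S UNIV \<and>
                          (\<forall>a\<in>S. \<forall>b\<in>S. a < b \<longleftrightarrow> f a < f b))) \<and>
            (\<forall>n\<in>S - {e}. lower_set S n \<subseteq> supp_m (q n) \<and>
                          supp_m (q n) \<subseteq> lower_set S n \<union> {n}) \<and>
            ((infinite S \<or> card S > 2) \<longrightarrow>
               (\<forall>m\<in>S. \<forall>n\<in>S. m \<noteq> e \<and> m < n \<longrightarrow>
                  q n e = q n m * q m e \<and>
                  finite (lower_set S n) \<and>
                  q n e * (1 + (\<Sum>k\<in>lower_set S n - {e}. 1 / q k e)) \<le> 1))))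
       \<and> (((infinite S \<or> card S > 2) \<longrightarrow>
               (\<forall>m\<in>S. \<forall>n\<in>S. m \<noteq> e \<and> m < n \<longrightarrow>
                  q n e = q n m * q m e \<and>
                  finite (lower_set S n) \<and>
                  q n e * (1 + (\<Sum>k\<in>lower_set S n - {e}. 1 / q k e)) \<le> 1))
          \<longleftrightarrow>
          ((infinite S \<or> card S > 2) \<longrightarrow>
               (\<forall>m\<in>S. \<forall>n\<in>S. m \<noteq> e \<and> m < n \<longrightarrow>
                  (let v = (\<lambda>k. if k = e then 1 else 1 / q k e) in
                   q n m = v m / v n \<and>
                   finite (lower_set S n) \<and>
                   (\<Sum>k\<in>lower_set S n. v k) \<le> v n))))"
proof -
  interpret max_conv_data S e q
    using assms by unfold_locales auto
  have "herm_disc_hypergroup S (max_conv e q) \<longleftrightarrow>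
      (finite S \<or> (\<exists>f::'a \<Rightarrow> nat. bij_betw f S UNIV \<and> (\<forall>a\<in>S. \<forall>b\<in>S. a < b \<longleftrightarrow> f a < f b)))
      \<and> support_condition \<and> ((infinite S \<or> 2 < card S) \<longrightarrow> mass_conditions)"
    using herm_disc_hypergroup_iff_conditions product_rule_imp_order_type
      product_rule_iff_mass_conditions
    by blast
  moreover have weight_eq: "(\<lambda>k. if k = e then 1 else 1 / q k e) = weight"
    by (simp add: fun_eq_iff weight_def)
  ultimately show ?thesis
    using mass_conditions_iff_weight_conditions
    unfolding support_condition_def mass_conditions_def weight_conditions_def
      weight_eq[symmetric] Let_def
    by blast
qed

end
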